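(* For all $s,t\in\mathbb{N}$ there exists $\delta=\delta(s,t)$ such that the following holds. Let $G$ be a graph with no minor in $\mathcal{K}_{s,t}$, and let $\{A,B\}$ be a partition of $V(G)$ such that $G[B]$ is connected and every vertex of $B$ has at least $s$ neighbours in $A$. Then $|B|\le\delta|A|$.
   Context: Graphs are finite, simple and undirected. For $s,t\in\mathbb{N}$, $\mathcal{K}_{s,t}$ is the class of graphs $G$ for which there is a partition $\{A,B\}$ of $V(G)$ with $|A|=s$, $|B|=t$, $vw\in E(G)$ for all $v\in A$ and $w\in B$, and $G[B]$ connected. "$G$ has no minor in $\mathcal{K}_{s,t}$" means no graph of $\mathcal{K}_{s,t}$ is isomorphic to a minor of $G$. *)

theory Defs
  imports Complex_Main
begin

definition graph :: "'a set \<Rightarrow> 'a set set \<Rightarrow> bool" where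
  "graph V E \<longleftrightarrow> finite V \<and> (\<forall>e\<in>E. \<exists>u v. e = {u, v} \<and> u \<noteq> v \<and> u \<in> V \<and> v \<in> V)"

definition connected_set :: "'a set set \<Rightarrow> 'a set \<Rightarrow> bool" where
  "connected_set E X \<longleftrightarrow> X \<noteq> {} \<and>
     (\<forall>u\<in>X. \<forall>v\<in>X. (\<lambda>x y. x \<in> X \<and> y \<in> X \<and> {x, y} \<in> E)\<^sup>*\<^sup>* u v)"

definition is_minor :: "'b set \<Rightarrow> 'b set set \<Rightarrow> 'a set \<Rightarrow> 'a set set \<Rightarrow> bool" where
  "is_minor VH EH VG EG \<longleftrightarrow> (\<exists>\<phi> :: 'b \<Rightarrow> 'a set.
     (\<forall>v\<in>VH. \<phi> v \<subseteq> VG \<and> connected_set EG (\<phi> v)) \<and>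
     (\<forall>v\<in>VH. \<forall>w\<in>VH. v \<noteq> w \<longrightarrow> \<phi> v \<inter> \<phi> w = {}) \<and>
     (\<forall>v w. {v, w} \<in> EH \<longrightarrow> (\<exists>x\<in>\<phi> v. \<exists>y\<in>\<phi> w. {x, y} \<in> EG)))"

definition in_Kst :: "nat \<Rightarrow> nat \<Rightarrow> 'b set \<Rightarrow> 'b set set \<Rightarrow> bool" where
  "in_Kst s t V E \<longleftrightarrow> graph V E \<and> (\<exists>A B. A \<inter> B = {} \<and> A \<union> B = V \<and> card A = s \<and> card B = t \<and>
     (\<forall>v\<in>A. \<forall>w\<in>B. {v, w} \<in> E) \<and> connected_set E B)"

text \<open>G has no minor in K_{s,t}. Since K_{s,t} is closed under isomorphism and its members
  are finite, it suffices to range over graphs with vertices in nat.\<close>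
definition no_Kst_minor :: "nat \<Rightarrow> nat \<Rightarrow> 'a set \<Rightarrow> 'a set set \<Rightarrow> bool" where
  "no_Kst_minor s t V E \<longleftrightarrow> \<not> (\<exists>(VH :: nat set) EH. in_Kst s t VH EH \<and> is_minor VH EH V E)"

end

theory Submission
  imports Defs
begin

text \<open>For each b in B fix an s-set N b of neighbours of b in A. Fewer than t vertices of B share
  the same set: growing t of them into a partition of the connected set B into t connected parts
  and contracting the parts would give a K_{s,t} minor. It remains to bound the number of distinct
  sets N b linearly in |A|. Every minor of G has at most 2^(s+t) times as many edges as vertices,
  since by a weak form of Mader's theorem a denser minor has a K_{s+t} minor. Contracting a
  common neighbour of each set onto one of its elements gives minors on A in which every set
  becomes a star, so few pairs of vertices of A lie in a common set. Hence some vertex a lies in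
  sets together with boundedly many other vertices, boundedly many sets contain a, and induction
  on |A| deals with the sets avoiding a.\<close>

lemma graph_finite_vertices: "graph V E \<Longrightarrow> finite V"
  unfolding graph_def by simp

lemma graph_edgeE:
  assumes "graph V E" "e \<in> E"
  obtains u v where "e = {u, v}" "u \<noteq> v" "u \<in> V" "v \<in> V"
  using assms unfolding graph_def by blast

lemma graph_edgeD: "graph V E \<Longrightarrow> {x, y} \<in> E \<Longrightarrow> x \<in> V \<and> y \<in> V \<and> x \<noteq> y"
  by (erule graph_edgeE) (auto simp: doubleton_eq_iff)

lemma graph_finite_edges:
  assumes "graph V E"
  shows "finite E"
proof -
  have "E \<subseteq> Pow V" using assms by (blast elim: graph_edgeE)
  with graph_finite_vertices[OF assms] show ?thesis by (meson finite_Pow_iff finite_subset)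
qed

section \<open>Connectivity\<close>

definition induced_adj :: "'a set set \<Rightarrow> 'a set \<Rightarrow> 'a \<Rightarrow> 'a \<Rightarrow> bool" where
  "induced_adj E X x y \<longleftrightarrow> x \<in> X \<and> y \<in> X \<and> {x, y} \<in> E"

lemma connected_set_iff:
  "connected_set E X \<longleftrightarrow> X \<noteq> {} \<and> (\<forall>u\<in>X. \<forall>v\<in>X. (induced_adj E X)\<^sup>*\<^sup>* u v)"
  unfolding connected_set_def induced_adj_def by simp

lemma connected_setI:
  "X \<noteq> {} \<Longrightarrow> (\<And>u v. u \<in> X \<Longrightarrow> v \<in> X \<Longrightarrow> (induced_adj E X)\<^sup>*\<^sup>* u v) \<Longrightarrow> connected_set E X"
  unfolding connected_set_iff by blast

lemma connected_set_nonempty: "connected_set E X \<Longrightarrow> X \<noteq> {}"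
  unfolding connected_set_iff by blast

lemma connected_setD: "connected_set E X \<Longrightarrow> u \<in> X \<Longrightarrow> v \<in> X \<Longrightarrow> (induced_adj E X)\<^sup>*\<^sup>* u v"
  unfolding connected_set_iff by blast

lemma induced_adj_rtranclp_mono:
  "(induced_adj E X)\<^sup>*\<^sup>* u v \<Longrightarrow> X \<subseteq> Y \<Longrightarrow> E \<subseteq> F \<Longrightarrow> (induced_adj F Y)\<^sup>*\<^sup>* u v"
  by (erule rtranclp_mono[THEN predicate2D, rotated]) (auto simp: induced_adj_def)

lemma induced_adj_rtranclp_sym: "(induced_adj E X)\<^sup>*\<^sup>* u v \<Longrightarrow> (induced_adj E X)\<^sup>*\<^sup>* v u"
  by (rule sympD[OF symp_rtranclp]) (auto simp: symp_def induced_adj_def insert_commute)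

lemma connected_set_mono_edges:
  assumes X: "connected_set E X" and "E \<subseteq> F"
  shows "connected_set F X"
proof (rule connected_setI)
  show "X \<noteq> {}" using connected_set_nonempty[OF X] .
  fix u v assume "u \<in> X" "v \<in> X"
  from connected_setD[OF X this] show "(induced_adj F X)\<^sup>*\<^sup>* u v"
    by (rule induced_adj_rtranclp_mono) (use assms(2) in auto)
qed

lemma connected_set_singleton: "connected_set E {a}"
  by (rule connected_setI) auto

lemma connected_set_insert:
  assumes X: "connected_set E X" and "u \<in> X" "{u, v} \<in> E"
  shows "connected_set E (insert v X)"
proof (rule connected_setI)
  let ?R = "induced_adj E (insert v X)"
  have in_X: "?R\<^sup>*\<^sup>* x y" if "x \<in> X" "y \<in> X" for x y
    using connected_setD[OF X that] by (rule induced_adj_rtranclp_mono) auto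
  have to_v: "?R\<^sup>*\<^sup>* x v" if "x \<in> X" for x
    using in_X[OF that \<open>u \<in> X\<close>] assms(2,3)
    by (auto intro: rtranclp.rtrancl_into_rtrancl simp: induced_adj_def)
  fix x y assume "x \<in> insert v X" "y \<in> insert v X"
  then show "?R\<^sup>*\<^sup>* x y"
    using in_X to_v[THEN induced_adj_rtranclp_sym] to_v by auto
qed simp

lemma connected_set_star:
  assumes "\<forall>b\<in>X. {a, b} \<in> E"
  shows "connected_set E (insert a X)"
proof (rule connected_setI)
  let ?R = "induced_adj E (insert a X)"
  have to_a: "?R\<^sup>*\<^sup>* u a" if "u \<in> insert a X" for u
  proof (cases "u = a")
    case False
    with that assms have "{u, a} \<in> E" by (auto simp: insert_commute)
    with that show ?thesis by (intro r_into_rtranclp) (simp add: induced_adj_def)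
  qed simp
  fix u w assume "u \<in> insert a X" "w \<in> insert a X"
  from to_a[OF this(1)] induced_adj_rtranclp_sym[OF to_a[OF this(2)]]
  show "?R\<^sup>*\<^sup>* u w" by (rule rtranclp_trans)
qed simp

lemma rtranclp_leaves_set:
  assumes "R\<^sup>*\<^sup>* u w" "u \<in> U" "w \<notin> U"
  obtains x y where "R x y" "x \<in> U" "y \<notin> U"
  using assms by (induction rule: rtranclp_induct) blast+

section \<open>Minor models\<close>

definition minor_model :: "'b set \<Rightarrow> 'b set set \<Rightarrow> 'a set \<Rightarrow> 'a set set \<Rightarrow> ('b \<Rightarrow> 'a set) \<Rightarrow> bool" where
  "minor_model VH EH VG EG \<phi> \<longleftrightarrow> (\<forall>v\<in>VH. \<phi> v \<subseteq> VG \<and> connected_set EG (\<phi> v)) \<and>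
     (\<forall>v\<in>VH. \<forall>w\<in>VH. v \<noteq> w \<longrightarrow> \<phi> v \<inter> \<phi> w = {}) \<and>
     (\<forall>v w. {v, w} \<in> EH \<longrightarrow> (\<exists>x\<in>\<phi> v. \<exists>y\<in>\<phi> w. {x, y} \<in> EG))"

lemma is_minor_iff_minor_model: "is_minor VH EH VG EG \<longleftrightarrow> (\<exists>\<phi>. minor_model VH EH VG EG \<phi>)"
  by (simp add: is_minor_def minor_model_def)

lemma minor_modelD:
  assumes "minor_model VH EH VG EG \<phi>"
  shows minor_model_subset: "v \<in> VH \<Longrightarrow> \<phi> v \<subseteq> VG"
    and minor_model_connected: "v \<in> VH \<Longrightarrow> connected_set EG (\<phi> v)"
    and minor_model_disjoint: "v \<in> VH \<Longrightarrow> w \<in> VH \<Longrightarrow> v \<noteq> w \<Longrightarrow> \<phi> v \<inter> \<phi> w = {}"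
    and minor_model_edge: "{v, w} \<in> EH \<Longrightarrow> \<exists>x\<in>\<phi> v. \<exists>y\<in>\<phi> w. {x, y} \<in> EG"
  using assms unfolding minor_model_def by auto

lemma connected_set_UN_branch_sets:
  assumes H: "connected_set EH X" and \<beta>: "minor_model VH EH VG EG \<beta>" and "X \<subseteq> VH"
  shows "connected_set EG (\<Union>(\<beta> ` X))"
proof (rule connected_setI)
  let ?R = "induced_adj EG (\<Union>(\<beta> ` X))"
  have within: "?R\<^sup>*\<^sup>* u w" if "a \<in> X" "u \<in> \<beta> a" "w \<in> \<beta> a" for a u w
  proof -
    have "a \<in> VH" using that(1) \<open>X \<subseteq> VH\<close> by blast
    from connected_setD[OF minor_model_connected[OF \<beta> this] that(2,3)]
    show ?thesis by (rule induced_adj_rtranclp_mono) (use that(1) in auto)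
  qed
  have along: "\<forall>u\<in>\<beta> a. \<forall>w\<in>\<beta> a'. ?R\<^sup>*\<^sup>* u w"
    if "(induced_adj EH X)\<^sup>*\<^sup>* a a'" "a \<in> X" for a a'
    using that(1)
  proof (induction rule: rtranclp_induct)
    case base then show ?case using within that(2) by blast
  next
    case (step y z)
    then have yz: "y \<in> X" "z \<in> X" "{y, z} \<in> EH" by (auto simp: induced_adj_def)
    obtain p q where pq: "p \<in> \<beta> y" "q \<in> \<beta> z" "{p, q} \<in> EG"
      using minor_model_edge[OF \<beta> yz(3)] by blast
    show ?case
    proof (intro ballI)
      fix u w assume u: "u \<in> \<beta> a" and w: "w \<in> \<beta> z"
      have "?R\<^sup>*\<^sup>* u p" using step.IH u pq(1) by blast
      moreover have "?R p q" using pq yz by (auto simp: induced_adj_def)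
      ultimately have "?R\<^sup>*\<^sup>* u q" by (rule rtranclp.rtrancl_into_rtrancl)
      then show "?R\<^sup>*\<^sup>* u w" using within[OF yz(2) pq(2) w] by (rule rtranclp_trans)
    qed
  qed
  show "\<Union>(\<beta> ` X) \<noteq> {}"
    using connected_set_nonempty[OF H] connected_set_nonempty[OF minor_model_connected[OF \<beta>]]
      \<open>X \<subseteq> VH\<close> by blast
  fix u w assume "u \<in> \<Union>(\<beta> ` X)" "w \<in> \<Union>(\<beta> ` X)"
  then obtain a a' where "a \<in> X" "a' \<in> X" "u \<in> \<beta> a" "w \<in> \<beta> a'" by blast
  with along[OF connected_setD[OF H \<open>a \<in> X\<close> \<open>a' \<in> X\<close>]] show "?R\<^sup>*\<^sup>* u w" by blast
qed

lemma minor_model_compose: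
  assumes \<phi>: "minor_model VK EK VH EH \<phi>" and \<beta>: "minor_model VH EH VG EG \<beta>"
  shows "minor_model VK EK VG EG (\<lambda>k. \<Union>(\<beta> ` \<phi> k))"
  unfolding minor_model_def
proof (intro conjI ballI allI impI)
  fix k assume k: "k \<in> VK"
  show "\<Union>(\<beta> ` \<phi> k) \<subseteq> VG"
    using minor_model_subset[OF \<beta>] minor_model_subset[OF \<phi> k] by blast
  show "connected_set EG (\<Union>(\<beta> ` \<phi> k))"
    by (rule connected_set_UN_branch_sets[OF minor_model_connected[OF \<phi> k] \<beta> minor_model_subset[OF \<phi> k]])
next
  fix k k' assume k: "k \<in> VK" "k' \<in> VK" "k \<noteq> k'"
  show "\<Union>(\<beta> ` \<phi> k) \<inter> \<Union>(\<beta> ` \<phi> k') = {}"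
  proof (rule equals0I)
    fix x assume "x \<in> \<Union>(\<beta> ` \<phi> k) \<inter> \<Union>(\<beta> ` \<phi> k')"
    then obtain a a' where a: "a \<in> \<phi> k" "a' \<in> \<phi> k'" "x \<in> \<beta> a" "x \<in> \<beta> a'" by blast
    have "a \<noteq> a'" using a(1,2) minor_model_disjoint[OF \<phi> k] by blast
    moreover have "a \<in> VH" "a' \<in> VH" using a(1,2) minor_model_subset[OF \<phi>] k(1,2) by blast+
    ultimately show False using a(3,4) minor_model_disjoint[OF \<beta>] by blast
  qed
next
  fix v w assume "{v, w} \<in> EK"
  then obtain p q where pq: "p \<in> \<phi> v" "q \<in> \<phi> w" "{p, q} \<in> EH"
    using minor_model_edge[OF \<phi>] by blast
  then obtain x y where "x \<in> \<beta> p" "y \<in> \<beta> q" "{x, y} \<in> EG"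
    using minor_model_edge[OF \<beta>] by blast
  with pq show "\<exists>x\<in>\<Union>(\<beta> ` \<phi> v). \<exists>y\<in>\<Union>(\<beta> ` \<phi> w). {x, y} \<in> EG" by blast
qed

definition quotient_edges :: "'b set \<Rightarrow> 'a set set \<Rightarrow> ('b \<Rightarrow> 'a set) \<Rightarrow> 'b set set" where
  "quotient_edges VH E \<phi> =
     {{v, w} | v w. v \<in> VH \<and> w \<in> VH \<and> v \<noteq> w \<and> (\<exists>x\<in>\<phi> v. \<exists>y\<in>\<phi> w. {x, y} \<in> E)}"

lemma quotient_edgesE:
  assumes "e \<in> quotient_edges VH E \<phi>"
  obtains v w x y where "e = {v, w}" "v \<in> VH" "w \<in> VH" "v \<noteq> w" "x \<in> \<phi> v" "y \<in> \<phi> w" "{x, y} \<in> E"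
  using assms unfolding quotient_edges_def by auto

lemma quotient_edgesI:
  "v \<in> VH \<Longrightarrow> w \<in> VH \<Longrightarrow> v \<noteq> w \<Longrightarrow> x \<in> \<phi> v \<Longrightarrow> y \<in> \<phi> w \<Longrightarrow> {x, y} \<in> E
    \<Longrightarrow> {v, w} \<in> quotient_edges VH E \<phi>"
  unfolding quotient_edges_def by auto

lemma graph_quotient_edges: "finite VH \<Longrightarrow> graph VH (quotient_edges VH E \<phi>)"
  unfolding graph_def by (blast elim: quotient_edgesE)

lemma minor_model_quotient_edges:
  assumes "\<forall>v\<in>VH. \<phi> v \<subseteq> V \<and> connected_set E (\<phi> v)"
    and "\<forall>v\<in>VH. \<forall>w\<in>VH. v \<noteq> w \<longrightarrow> \<phi> v \<inter> \<phi> w = {}"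
  shows "minor_model VH (quotient_edges VH E \<phi>) V E \<phi>"
proof -
  have "\<exists>x\<in>\<phi> v. \<exists>y\<in>\<phi> w. {x, y} \<in> E" if "{v, w} \<in> quotient_edges VH E \<phi>" for v w
    using that
  proof (rule quotient_edgesE)
    fix v' w' x y assume "{v, w} = {v', w'}" "x \<in> \<phi> v'" "y \<in> \<phi> w'" "{x, y} \<in> E"
    then show ?thesis unfolding doubleton_eq_iff by (metis insert_commute)
  qed
  with assms show ?thesis unfolding minor_model_def by blast
qed

lemma connected_set_quotient_edges:
  assumes X: "connected_set E (\<Union>(\<phi> ` I))" and ne: "\<forall>v\<in>I. \<phi> v \<noteq> {}"
    and disj: "\<forall>v\<in>I. \<forall>w\<in>I. v \<noteq> w \<longrightarrow> \<phi> v \<inter> \<phi> w = {}" and "I \<subseteq> VH"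
  shows "connected_set (quotient_edges VH E \<phi>) I"
proof (rule connected_setI)
  let ?Q = "induced_adj (quotient_edges VH E \<phi>) I"
  have lift: "\<forall>v\<in>I. \<forall>w\<in>I. x \<in> \<phi> v \<longrightarrow> y \<in> \<phi> w \<longrightarrow> ?Q\<^sup>*\<^sup>* v w"
    if "(induced_adj E (\<Union>(\<phi> ` I)))\<^sup>*\<^sup>* x y" for x y
    using that
  proof (induction rule: rtranclp_induct)
    case base then show ?case using disj by (metis disjoint_iff rtranclp.rtrancl_refl)
  next
    case (step y z)
    show ?case
    proof (intro ballI impI)
      fix v w assume "v \<in> I" "w \<in> I" "x \<in> \<phi> v" "z \<in> \<phi> w"
      obtain u where u: "u \<in> I" "y \<in> \<phi> u" using step(2) by (auto simp: induced_adj_def)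
      have "{y, z} \<in> E" using step(2) by (simp add: induced_adj_def)
      then have "u = w \<or> ?Q u w"
        using u \<open>w \<in> I\<close> \<open>z \<in> \<phi> w\<close> \<open>I \<subseteq> VH\<close>
        by (auto simp: induced_adj_def intro: quotient_edgesI)
      with step.IH[rule_format, OF \<open>v \<in> I\<close> u(1) \<open>x \<in> \<phi> v\<close> u(2)]
      show "?Q\<^sup>*\<^sup>* v w" by (auto intro: rtranclp.rtrancl_into_rtrancl)
    qed
  qed
  show "I \<noteq> {}" using connected_set_nonempty[OF X] by blast
  fix v w assume "v \<in> I" "w \<in> I"
  then obtain x y where "x \<in> \<phi> v" "y \<in> \<phi> w" using ne by blast
  with lift[OF connected_setD[OF X]] \<open>v \<in> I\<close> \<open>w \<in> I\<close> show "?Q\<^sup>*\<^sup>* v w" by blast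
qed

definition complete_edges :: "nat \<Rightarrow> nat set set" where
  "complete_edges r = {{i, j} | i j. i < r \<and> j < r \<and> i \<noteq> j}"

lemma complete_edges_iff: "{i, j} \<in> complete_edges r \<longleftrightarrow> i < r \<and> j < r \<and> i \<noteq> j"
  unfolding complete_edges_def by (auto simp: doubleton_eq_iff)

lemma in_Kst_complete_edges:
  assumes "t \<ge> 1"
  shows "in_Kst s t {0..<s+t} (complete_edges (s+t))"
proof -
  have "graph {0..<s+t} (complete_edges (s+t))" unfolding graph_def complete_edges_def by auto
  moreover have "connected_set (complete_edges (s+t)) {s..<s+t}"
  proof (rule connected_setI)
    fix u v assume "u \<in> {s..<s+t}" "v \<in> {s..<s+t}"
    then show "(induced_adj (complete_edges (s+t)) {s..<s+t})\<^sup>*\<^sup>* u v"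
      by (cases "u = v") (auto intro: r_into_rtranclp simp: induced_adj_def complete_edges_iff)
  qed (use assms in simp)
  ultimately show ?thesis
    unfolding in_Kst_def by (intro conjI exI[of _ "{0..<s}"] exI[of _ "{s..<s+t}"]) (auto simp: complete_edges_iff)
qed

lemma complete_minor_not_Kst_minor_free:
  assumes "minor_model {0..<s+t} (complete_edges (s+t)) V E \<phi>" "t \<ge> 1"
  shows "\<not> no_Kst_minor s t V E"
  unfolding no_Kst_minor_def is_minor_iff_minor_model
  using in_Kst_complete_edges[OF assms(2)] assms(1) by blast

section \<open>Counting edges\<close>

lemma card_doubleton_preimage_le:
  "finite {(a, b). {a, b} = e} \<and> card {(a, b). {a, b} = e} \<le> 2"
proof (cases "\<exists>u v. e = {u, v}")
  case True
  then obtain u v where e: "e = {u, v}" by blast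
  have sub: "{(a, b). {a, b} = e} \<subseteq> {(u, v), (v, u)}"
    unfolding e by (auto simp: doubleton_eq_iff)
  have "card {(a, b). {a, b} = e} \<le> card {(u, v), (v, u)}" using sub by (intro card_mono) simp_all
  also have "\<dots> \<le> 2" by (rule card_insert_le_m1) auto
  finally show ?thesis using finite_subset[OF sub] by blast
next
  case False
  then have "{(a, b). {a, b} = e} = {}" by blast
  then show ?thesis by simp
qed

lemma card_doubleton_preimage_set_le:
  assumes "finite F"
  shows "finite {(a, b). {a, b} \<in> F}" "card {(a, b). {a, b} \<in> F} \<le> 2 * card F"
proof -
  have sub: "{(a, b). {a, b} \<in> F} \<subseteq> (\<Union>e\<in>F. {(a, b). {a, b} = e})" by auto
  have fin: "finite (\<Union>e\<in>F. {(a, b). {a, b} = e})"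
    using assms card_doubleton_preimage_le by (intro finite_UN_I) blast+
  then show "finite {(a, b). {a, b} \<in> F}" using sub by (rule finite_subset[rotated])
  have "card {(a, b). {a, b} \<in> F} \<le> card (\<Union>e\<in>F. {(a, b). {a, b} = e})"
    using sub fin by (rule card_mono[rotated])
  also have "\<dots> \<le> (\<Sum>e\<in>F. card {(a, b). {a, b} = e})" by (rule card_UN_le[OF assms])
  also have "\<dots> \<le> (\<Sum>e\<in>F. 2)" by (rule sum_mono) (use card_doubleton_preimage_le in blast)
  finally show "card {(a, b). {a, b} \<in> F} \<le> 2 * card F" by simp
qed

lemma sum_degrees_le:
  assumes "finite F" "finite W"
  shows "(\<Sum>a\<in>W. card {b \<in> W. {a, b} \<in> F}) \<le> 2 * card F"
proof -
  have "(\<Sum>a\<in>W. card {b \<in> W. {a, b} \<in> F}) = card (SIGMA a:W. {b \<in> W. {a, b} \<in> F})"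
    using assms(2) by (subst card_SigmaI) auto
  also have "\<dots> \<le> card {(a, b). {a, b} \<in> F}"
    using card_doubleton_preimage_set_le(1)[OF assms(1)] by (intro card_mono) auto
  also have "\<dots> \<le> 2 * card F" by (rule card_doubleton_preimage_set_le(2)[OF assms(1)])
  finally show ?thesis .
qed

lemma exists_card_Image_le:
  assumes "finite A" "A \<noteq> {}" "P \<subseteq> A \<times> A" "card P \<le> D * card A"
  shows "\<exists>a\<in>A. card (P `` {a}) \<le> D"
proof (rule ccontr)
  assume "\<not> ?thesis"
  then have "(\<Sum>a\<in>A. D) < (\<Sum>a\<in>A. card (P `` {a}))"
    using assms(1,2) by (intro sum_strict_mono) auto
  also have "\<dots> = card (SIGMA a:A. P `` {a})"
  proof (rule card_SigmaI[symmetric, OF assms(1)])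
    show "\<forall>a\<in>A. finite (P `` {a})"
      using assms(3) finite_subset[OF _ assms(1)] by blast
  qed
  also have "(SIGMA a:A. P `` {a}) = P" using assms(3) by blast
  finally show False using assms(4) by (simp add: mult.commute)
qed

lemma card_le_mult_card_image:
  assumes "finite B" "\<forall>y\<in>f ` B. card {x \<in> B. f x = y} \<le> t"
  shows "card B \<le> t * card (f ` B)"
proof -
  have "card B = (\<Sum>y\<in>f ` B. card {x \<in> B. f x = y})"
    using sum.image_gen[OF assms(1), of "\<lambda>_. 1 :: nat" f] by simp
  also have "\<dots> \<le> (\<Sum>y\<in>f ` B. t)" using assms(2) by (intro sum_mono) blast
  finally show ?thesis by (simp add: mult.commute)
qed

section \<open>Contraction and a weak form of Mader's theorem\<close>

definition nbhd :: "'a set set \<Rightarrow> 'a \<Rightarrow> 'a set" where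
  "nbhd E x = {z. {x, z} \<in> E}"

lemma nbhd_subset: "graph V E \<Longrightarrow> nbhd E x \<subseteq> V"
  unfolding nbhd_def by (auto dest: graph_edgeD)

lemma not_in_nbhd: "graph V E \<Longrightarrow> x \<notin> nbhd E x"
  unfolding nbhd_def using graph_edgeD[of V E x x] by auto

lemma minor_model_complete_apex:
  assumes g: "graph V E" and x: "x \<in> V"
    and m: "minor_model {0..<r} (complete_edges r) (nbhd E x) EN \<phi>" and EN: "EN \<subseteq> E"
  shows "minor_model {0..<Suc r} (complete_edges (Suc r)) V E (\<phi>(r := {x}))"
  unfolding minor_model_def
proof (intro conjI ballI allI impI)
  fix v assume v: "v \<in> {0..<Suc r}"
  show "(\<phi>(r := {x})) v \<subseteq> V"
    using minor_model_subset[OF m, of v] v nbhd_subset[OF g] x by (cases "v = r") auto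
  show "connected_set E ((\<phi>(r := {x})) v)"
    using minor_model_connected[OF m, of v] v connected_set_mono_edges[OF _ EN] connected_set_singleton
    by (cases "v = r") auto
next
  have x_notin: "x \<notin> \<phi> u" if "u < r" for u
    using minor_model_subset[OF m, of u] not_in_nbhd[OF g, of x] that by auto
  fix v w assume "v \<in> {0..<Suc r}" "w \<in> {0..<Suc r}" "v \<noteq> w"
  then show "(\<phi>(r := {x})) v \<inter> (\<phi>(r := {x})) w = {}"
    using minor_model_disjoint[OF m] x_notin by (cases "v = r \<or> w = r") auto
next
  have apex_edge: "\<exists>q\<in>\<phi> w. {x, q} \<in> E" if w: "w < r" for w
  proof -
    obtain q where "q \<in> \<phi> w" using connected_set_nonempty[OF minor_model_connected[OF m]] w by fastforce
    with minor_model_subset[OF m, of w] w show ?thesis unfolding nbhd_def by auto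
  qed
  fix v w assume "{v, w} \<in> complete_edges (Suc r)"
  then have vw: "v < Suc r" "w < Suc r" "v \<noteq> w" by (auto simp: complete_edges_iff)
  consider "v = r" | "w = r" | "v < r" "w < r" using vw by linarith
  then show "\<exists>p\<in>(\<phi>(r := {x})) v. \<exists>q\<in>(\<phi>(r := {x})) w. {p, q} \<in> E"
  proof cases
    case 1 with vw apex_edge[of w] show ?thesis by auto
  next
    case 2 with vw apex_edge[of v] show ?thesis by (auto simp: insert_commute)
  next
    case 3
    then have "{v, w} \<in> complete_edges r" using vw by (simp add: complete_edges_iff)
    then obtain p q where "p \<in> \<phi> v" "q \<in> \<phi> w" "{p, q} \<in> EN" using minor_model_edge[OF m] by blast
    with 3 EN show ?thesis by auto
  qed
qed

definition contract_edge :: "'a \<Rightarrow> 'a \<Rightarrow> 'a set \<Rightarrow> 'a set" where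
  "contract_edge x y e = (if y \<in> e then insert x (e - {y}) else e)"

definition contract :: "'a \<Rightarrow> 'a \<Rightarrow> 'a set set \<Rightarrow> 'a set set" where
  "contract x y E = contract_edge x y ` (E - {{x, y}})"

definition contraction_branch :: "'a \<Rightarrow> 'a \<Rightarrow> 'a \<Rightarrow> 'a set" where
  "contraction_branch x y v = (if v = x then {x, y} else {v})"

lemma contract_edge_cases:
  assumes g: "graph V E" and e: "e \<in> E - {{x, y}}"
  shows "(y \<notin> e \<and> contract_edge x y e = e) \<or>
    (\<exists>z. e = {y, z} \<and> z \<noteq> y \<and> z \<noteq> x \<and> z \<in> V \<and> contract_edge x y e = {x, z})"
proof (cases "y \<in> e")
  case True
  obtain u v where uv: "e = {u, v}" "u \<noteq> v" "u \<in> V" "v \<in> V" using graph_edgeE[OF g] e by blast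
  with True obtain z where z: "e = {y, z}" "z \<noteq> y" "z \<in> V" by (auto simp: insert_commute)
  with e have "z \<noteq> x" by (auto simp: insert_commute)
  moreover have "contract_edge x y e = {x, z}" using True z by (auto simp: contract_edge_def)
  ultimately show ?thesis using z by blast
qed (simp add: contract_edge_def)

lemma graph_contract:
  assumes g: "graph V E" and xy: "{x, y} \<in> E"
  shows "graph (V - {y}) (contract x y E)"
  unfolding graph_def
proof (intro conjI ballI)
  show "finite (V - {y})" using graph_finite_vertices[OF g] by simp
  have x: "x \<in> V" "x \<noteq> y" using graph_edgeD[OF g xy] by auto
  fix e' assume "e' \<in> contract x y E"
  then obtain e where e: "e \<in> E - {{x, y}}" "e' = contract_edge x y e" unfolding contract_def by blast
  obtain u v where uv: "e = {u, v}" "u \<noteq> v" "u \<in> V" "v \<in> V" using graph_edgeE[OF g] e by blast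
  from contract_edge_cases[OF g e(1)]
  show "\<exists>u v. e' = {u, v} \<and> u \<noteq> v \<and> u \<in> V - {y} \<and> v \<in> V - {y}"
  proof (elim disjE exE conjE)
    assume "y \<notin> e" "contract_edge x y e = e"
    with uv e show ?thesis by auto
  next
    fix z assume "z \<noteq> y" "z \<noteq> x" "z \<in> V" "contract_edge x y e = {x, z}"
    with e(2) x show ?thesis by auto
  qed
qed

lemma card_contract_less:
  assumes "finite E" "{x, y} \<in> E"
  shows "card (contract x y E) < card E"
proof -
  have "card (contract x y E) \<le> card (E - {{x, y}})"
    unfolding contract_def using assms(1) by (intro card_image_le) simp
  also have "\<dots> < card E" using assms by (intro card_Diff1_less)
  finally show ?thesis .
qed

lemma inj_on_contract_edge:
  assumes g: "graph V E"
  shows "inj_on (contract_edge x y)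
    (E - {{x, y}} - (\<lambda>z. {y, z}) ` (nbhd E x \<inter> nbhd E y))"
    (is "inj_on _ ?D")
proof (rule inj_onI)
  have no_common: "{x, z} \<notin> E" if "{y, z} \<in> ?D" for z
    using that unfolding nbhd_def by auto
  fix e1 e2 assume e1: "e1 \<in> ?D" and e2: "e2 \<in> ?D" and eq: "contract_edge x y e1 = contract_edge x y e2"
  have "e1 \<in> E - {{x, y}}" "e2 \<in> E - {{x, y}}" using e1 e2 by auto
  from contract_edge_cases[OF g this(1)] contract_edge_cases[OF g this(2)]
  show "e1 = e2"
  proof (elim disjE exE conjE)
    assume "contract_edge x y e1 = e1" "contract_edge x y e2 = e2"
    with eq show ?thesis by simp
  next
    fix z assume "contract_edge x y e1 = e1" "e2 = {y, z}" "contract_edge x y e2 = {x, z}"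
    with eq e1 e2 no_common[of z] show ?thesis by auto
  next
    fix z assume "e1 = {y, z}" "contract_edge x y e1 = {x, z}" "contract_edge x y e2 = e2"
    with eq e1 e2 no_common[of z] show ?thesis by auto
  next
    fix z z' assume "e1 = {y, z}" "z \<noteq> x" "contract_edge x y e1 = {x, z}"
      "e2 = {y, z'}" "z' \<noteq> x" "contract_edge x y e2 = {x, z'}"
    with eq show ?thesis by (auto simp: doubleton_eq_iff)
  qed
qed

text \<open>Contracting xy loses only the edge xy itself and, for each common neighbour z, the edge yz,
  which is merged with xz.\<close>
lemma card_le_card_contract:
  assumes g: "graph V E" and xy: "{x, y} \<in> E"
  shows "card E \<le> card (contract x y E) + 1 + card (nbhd E x \<inter> nbhd E y)"
proof -
  let ?C = "nbhd E x \<inter> nbhd E y"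
  let ?D = "E - {{x, y}} - (\<lambda>z. {y, z}) ` ?C"
  have fE: "finite E" using graph_finite_edges[OF g] .
  have fC: "finite ?C" using nbhd_subset[OF g] graph_finite_vertices[OF g] by (meson finite_Int finite_subset)
  have "card ?D = card (contract_edge x y ` ?D)"
    using card_image[OF inj_on_contract_edge[OF g]] by simp
  also have "\<dots> \<le> card (contract x y E)"
    unfolding contract_def using fE by (intro card_mono) auto
  finally have D: "card ?D \<le> card (contract x y E)" .
  let ?Y = "(\<lambda>z. {y, z}) ` ?C"
  have fin: "finite (?D \<union> ?Y)" using fE fC by auto
  have "E \<subseteq> insert {x, y} (?D \<union> ?Y)" by blast
  then have "card E \<le> card (insert {x, y} (?D \<union> ?Y))"
    using fin by (intro card_mono) auto
  also have "\<dots> \<le> Suc (card (?D \<union> ?Y))" using fin by (simp add: card_insert_if)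
  also have "\<dots> \<le> Suc (card ?D + card ?Y)" using card_Un_le[of ?D ?Y] by (simp only: Suc_le_mono)
  also have "\<dots> \<le> Suc (card ?D + card ?C)" using card_image_le[OF fC] by simp
  finally show ?thesis using D by linarith
qed

lemma minor_model_contraction_branch:
  assumes g: "graph V E" and xy: "{x, y} \<in> E"
  shows "minor_model (V - {y}) (contract x y E) V E (contraction_branch x y)"
  unfolding minor_model_def
proof (intro conjI ballI allI impI)
  have x: "x \<in> V" "y \<in> V" "x \<noteq> y" using graph_edgeD[OF g xy] by auto
  have self: "v \<in> contraction_branch x y v" for v by (simp add: contraction_branch_def)
  fix v assume v: "v \<in> V - {y}"
  show "contraction_branch x y v \<subseteq> V" using v x by (auto simp: contraction_branch_def)
  have "connected_set E (insert y {x})"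
    by (rule connected_set_insert[OF connected_set_singleton _ xy]) simp
  then show "connected_set E (contraction_branch x y v)"
    by (simp add: contraction_branch_def connected_set_singleton insert_commute)
next
  fix v w assume "v \<in> V - {y}" "w \<in> V - {y}" "v \<noteq> w"
  then show "contraction_branch x y v \<inter> contraction_branch x y w = {}"
    by (auto simp: contraction_branch_def)
next
  have self: "v \<in> contraction_branch x y v" for v by (simp add: contraction_branch_def)
  fix v w assume "{v, w} \<in> contract x y E"
  then obtain e where e: "e \<in> E - {{x, y}}" "{v, w} = contract_edge x y e"
    unfolding contract_def by blast
  from contract_edge_cases[OF g e(1)]
  show "\<exists>p\<in>contraction_branch x y v. \<exists>q\<in>contraction_branch x y w. {p, q} \<in> E"
  proof (elim disjE exE conjE)
    assume "contract_edge x y e = e"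
    with e have "{v, w} \<in> E" by simp
    with self show ?thesis by blast
  next
    fix z assume z: "e = {y, z}" "contract_edge x y e = {x, z}"
    have yz: "{y, z} \<in> E" "{z, y} \<in> E" using z e by (auto simp: insert_commute)
    have "y \<in> contraction_branch x y x" by (simp add: contraction_branch_def)
    moreover have "(v = x \<and> w = z) \<or> (v = z \<and> w = x)"
      using e(2) z(2) by (auto simp: doubleton_eq_iff)
    ultimately show ?thesis using yz self by blast
  qed
qed
lemma graph_induced:
  assumes "graph V E" "W \<subseteq> V"
  shows "graph W {e \<in> E. e \<subseteq> W}"
  unfolding graph_def
proof (intro conjI ballI)
  show "finite W" using finite_subset[OF assms(2) graph_finite_vertices[OF assms(1)]] .
  fix e assume e: "e \<in> {e \<in> E. e \<subseteq> W}"
  then have "e \<in> E" by simp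
  then obtain u v where "e = {u, v}" "u \<noteq> v" "u \<in> V" "v \<in> V" by (rule graph_edgeE[OF assms(1)])
  with e show "\<exists>u v. e = {u, v} \<and> u \<noteq> v \<and> u \<in> W \<and> v \<in> W" by auto
qed

lemma common_nbhd_large_if_contraction_sparse:
  assumes g: "graph V E" and xy: "{x, y} \<in> E"
    and dense: "c * card V \<le> card E" and sparse: "card (contract x y E) < c * card (V - {y})"
  shows "c \<le> card (nbhd E x \<inter> nbhd E y)"
proof -
  have "y \<in> V" using graph_edgeD[OF g xy] by simp
  then have "card V = Suc (card (V - {y}))" by (rule card.remove[OF graph_finite_vertices[OF g]])
  then have "c * card (V - {y}) + c = c * card V" by simp
  with dense sparse card_le_card_contract[OF g xy] show ?thesis by linarith
qed

lemma card_nbhd_edges_ge: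
  assumes g: "graph V E" and common: "\<forall>y\<in>nbhd E x. c \<le> card (nbhd E x \<inter> nbhd E y)"
  shows "c * card (nbhd E x) \<le> 2 * card {e \<in> E. e \<subseteq> nbhd E x}"
proof -
  let ?N = "nbhd E x"
  let ?EN = "{e \<in> E. e \<subseteq> ?N}"
  have fN: "finite ?N" using nbhd_subset[OF g] graph_finite_vertices[OF g] by (rule finite_subset)
  have deg: "{w \<in> ?N. {z, w} \<in> ?EN} = ?N \<inter> nbhd E z" if "z \<in> ?N" for z
    using that unfolding nbhd_def by auto
  have "(\<Sum>z\<in>?N. c) \<le> (\<Sum>z\<in>?N. card {w \<in> ?N. {z, w} \<in> ?EN})"
    using common deg by (intro sum_mono) simp
  also have "\<dots> \<le> 2 * card ?EN"
    using graph_finite_edges[OF g] fN by (intro sum_degrees_le) auto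
  finally show ?thesis by (simp add: mult.commute)
qed

text \<open>If no contraction keeps the density, every edge has many common neighbours, so the
  neighbourhood of any vertex is dense enough for a K_r model, to which that vertex is added as an
  apex.\<close>
lemma complete_minor_of_sparse_contractions:
  fixes V :: "'a set"
  assumes IH: "\<And>V' E'. graph V' E' \<Longrightarrow> V' \<noteq> {} \<Longrightarrow> 2 ^ r * card V' \<le> card E' \<Longrightarrow>
      \<exists>\<phi>. minor_model {0..<r} (complete_edges r) (V' :: 'a set) E' \<phi>"
    and g: "graph V E" and "V \<noteq> {}" and dense: "2 ^ Suc r * card V \<le> card E"
    and sparse: "\<forall>x y. {x, y} \<in> E \<longrightarrow> card (contract x y E) < 2 ^ Suc r * card (V - {y})"
  shows "\<exists>\<phi>. minor_model {0..<Suc r} (complete_edges (Suc r)) V E \<phi>"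
proof -
  have "E \<noteq> {}"
  proof
    assume "E = {}"
    with dense have "card V = 0" by simp
    with \<open>V \<noteq> {}\<close> graph_finite_vertices[OF g] show False by simp
  qed
  then obtain e where "e \<in> E" by blast
  then obtain x y where "e = {x, y}" "x \<noteq> y" "x \<in> V" "y \<in> V" by (rule graph_edgeE[OF g])
  with \<open>e \<in> E\<close> have xy: "{x, y} \<in> E" "x \<in> V" by simp_all
  have common: "\<forall>z\<in>nbhd E x. 2 ^ Suc r \<le> card (nbhd E x \<inter> nbhd E z)"
  proof
    fix z assume "z \<in> nbhd E x"
    then have xz: "{x, z} \<in> E" by (simp add: nbhd_def)
    from common_nbhd_large_if_contraction_sparse[OF g xz dense] sparse xz
    show "2 ^ Suc r \<le> card (nbhd E x \<inter> nbhd E z)" by blast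
  qed
  have "2 ^ r * card (nbhd E x) \<le> card {e \<in> E. e \<subseteq> nbhd E x}"
    using card_nbhd_edges_ge[OF g common] by simp
  moreover have "nbhd E x \<noteq> {}" using xy unfolding nbhd_def by blast
  ultimately obtain \<phi> where
    "minor_model {0..<r} (complete_edges r) (nbhd E x) {e \<in> E. e \<subseteq> nbhd E x} \<phi>"
    using IH[OF graph_induced[OF g nbhd_subset[OF g]]] by blast
  from minor_model_complete_apex[OF g xy(2) this] show ?thesis by blast
qed

lemma complete_minor_of_density_Suc:
  fixes V :: "'a set"
  assumes IH: "\<And>V' E'. graph V' E' \<Longrightarrow> V' \<noteq> {} \<Longrightarrow> 2 ^ r * card V' \<le> card E' \<Longrightarrow>
      \<exists>\<phi>. minor_model {0..<r} (complete_edges r) (V' :: 'a set) E' \<phi>"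
  shows "graph V E \<Longrightarrow> V \<noteq> {} \<Longrightarrow> 2 ^ Suc r * card V \<le> card E \<Longrightarrow>
      \<exists>\<phi>. minor_model {0..<Suc r} (complete_edges (Suc r)) V E \<phi>"
proof (induction "card V + card E" arbitrary: V E rule: less_induct)
  case less
  let ?c = "2 ^ Suc r :: nat"
  note g = less.prems(1)
  show ?case
  proof (cases "\<exists>x y. {x, y} \<in> E \<and> ?c * card (V - {y}) \<le> card (contract x y E)")
    case True
    then obtain x y where xy: "{x, y} \<in> E" and dense: "?c * card (V - {y}) \<le> card (contract x y E)"
      by blast
    have x: "x \<in> V" "y \<in> V" "x \<noteq> y" using graph_edgeD[OF g xy] by auto
    then have ne: "V - {y} \<noteq> {}" by blast
    have "card (V - {y}) + card (contract x y E) < card V + card E"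
      using card_Diff1_less[OF graph_finite_vertices[OF g] x(2)]
        card_contract_less[OF graph_finite_edges[OF g] xy] by linarith
    from less.hyps[OF this graph_contract[OF g xy] ne dense]
    obtain \<phi> where "minor_model {0..<Suc r} (complete_edges (Suc r)) (V - {y}) (contract x y E) \<phi>"
      by blast
    from minor_model_compose[OF this minor_model_contraction_branch[OF g xy]] show ?thesis by blast
  next
    case False
    then have "\<forall>x y. {x, y} \<in> E \<longrightarrow> card (contract x y E) < ?c * card (V - {y})"
      by (meson not_le)
    with complete_minor_of_sparse_contractions[OF IH less.prems] show ?thesis by blast
  qed
qed

theorem complete_minor_of_density:
  "graph V E \<Longrightarrow> V \<noteq> {} \<Longrightarrow> 2 ^ r * card V \<le> card E \<Longrightarrow>
    \<exists>\<phi>. minor_model {0..<r} (complete_edges r) V E \<phi>"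
proof (induction r arbitrary: V E)
  case 0
  show ?case by (rule exI[of _ "\<lambda>_. {}"]) (simp add: minor_model_def complete_edges_def)
next
  case (Suc r)
  from complete_minor_of_density_Suc[OF Suc.IH Suc.prems] show ?case .
qed

lemma card_minor_edges_le:
  assumes "no_Kst_minor s t V E" "t \<ge> 1" and H: "graph VH EH" "minor_model VH EH V E \<beta>"
  shows "card EH \<le> 2 ^ (s + t) * card VH"
proof (rule ccontr)
  assume dense: "\<not> ?thesis"
  have "VH \<noteq> {}"
  proof
    assume "VH = {}"
    then have "EH = {}" using graph_edgeE[OF H(1)] by blast
    with dense show False by simp
  qed
  moreover have "2 ^ (s + t) * card VH \<le> card EH" using dense by simp
  ultimately obtain \<phi> where "minor_model {0..<s+t} (complete_edges (s+t)) VH EH \<phi>"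
    using complete_minor_of_density[OF H(1)] by blast
  from complete_minor_not_Kst_minor_free[OF minor_model_compose[OF this H(2)] assms(2)] assms(1)
  show False by blast
qed

section \<open>K_{s,t} minors from common neighbours\<close>

lemma Kst_minor_of_branch_sets:
  assumes t: "t \<ge> 1"
    and branch: "\<forall>v\<in>{0..<s+t}. \<phi> v \<subseteq> V \<and> connected_set E (\<phi> v)"
    and disj: "\<forall>v\<in>{0..<s+t}. \<forall>w\<in>{0..<s+t}. v \<noteq> w \<longrightarrow> \<phi> v \<inter> \<phi> w = {}"
    and adj: "\<forall>v<s. \<forall>w\<in>{s..<s+t}. \<exists>x\<in>\<phi> v. \<exists>y\<in>\<phi> w. {x, y} \<in> E"
    and conn: "connected_set E (\<Union>(\<phi> ` {s..<s+t}))"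
  shows "\<not> no_Kst_minor s t V E"
proof -
  let ?EH = "quotient_edges {0..<s+t} E \<phi>"
  have "connected_set ?EH {s..<s+t}"
  proof (rule connected_set_quotient_edges[OF conn])
    show "\<forall>v\<in>{s..<s+t}. \<phi> v \<noteq> {}"
      using branch connected_set_nonempty by (metis atLeastLessThan_iff le0)
  qed (use disj in auto)
  moreover have "\<forall>v\<in>{0..<s}. \<forall>w\<in>{s..<s+t}. {v, w} \<in> ?EH"
  proof (intro ballI)
    fix v w assume vw: "v \<in> {0..<s}" "w \<in> {s..<s+t}"
    then have "\<exists>x\<in>\<phi> v. \<exists>y\<in>\<phi> w. {x, y} \<in> E" using adj by simp
    then obtain x y where "x \<in> \<phi> v" "y \<in> \<phi> w" "{x, y} \<in> E" by blast
    with vw show "{v, w} \<in> ?EH" by (intro quotient_edgesI) auto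
  qed
  ultimately have "in_Kst s t {0..<s+t} ?EH"
    unfolding in_Kst_def using t graph_quotient_edges[of "{0..<s+t}"]
    by (intro conjI exI[of _ "{0..<s}"] exI[of _ "{s..<s+t}"]) auto
  moreover have "minor_model {0..<s+t} ?EH V E \<phi>"
    using branch disj by (rule minor_model_quotient_edges)
  ultimately show ?thesis unfolding no_Kst_minor_def is_minor_iff_minor_model by blast
qed

lemma connected_parts_grow:
  assumes B: "connected_set E B" "finite B" and "i0 \<in> I"
    and P: "\<forall>i\<in>I. P i \<subseteq> B \<and> connected_set E (P i)"
    and disj: "\<forall>i\<in>I. \<forall>j\<in>I. i \<noteq> j \<longrightarrow> P i \<inter> P j = {}" and "\<Union>(P ` I) \<noteq> B"
  obtains P' where "\<forall>i\<in>I. P i \<subseteq> P' i \<and> P' i \<subseteq> B \<and> connected_set E (P' i)"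
    "\<forall>i\<in>I. \<forall>j\<in>I. i \<noteq> j \<longrightarrow> P' i \<inter> P' j = {}"
    "card (B - \<Union>(P' ` I)) < card (B - \<Union>(P ` I))"
proof -
  let ?U = "\<Union>(P ` I)"
  obtain w where w: "w \<in> B" "w \<notin> ?U" using P \<open>\<Union>(P ` I) \<noteq> B\<close> by blast
  obtain u where "u \<in> P i0" using P \<open>i0 \<in> I\<close> connected_set_nonempty by blast
  then have u: "u \<in> ?U" "u \<in> B" using P \<open>i0 \<in> I\<close> by blast+
  from connected_setD[OF B(1) u(2) w(1)] u(1) w(2)
  obtain x v where xv: "induced_adj E B x v" "x \<in> ?U" "v \<notin> ?U" by (rule rtranclp_leaves_set)
  then obtain i where i: "i \<in> I" "x \<in> P i" by blast
  have v: "v \<in> B - ?U" using xv by (simp add: induced_adj_def)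
  let ?P = "P(i := insert v (P i))"
  show ?thesis
  proof
    have "connected_set E (insert v (P i))"
      using connected_set_insert[OF _ i(2)] P i(1) xv(1) by (simp add: induced_adj_def)
    with P v show "\<forall>j\<in>I. P j \<subseteq> ?P j \<and> ?P j \<subseteq> B \<and> connected_set E (?P j)" by auto
    show "\<forall>j\<in>I. \<forall>k\<in>I. j \<noteq> k \<longrightarrow> ?P j \<inter> ?P k = {}"
    proof (intro ballI impI)
      fix j k assume "j \<in> I" "k \<in> I" "j \<noteq> k"
      moreover have "v \<notin> P j" "v \<notin> P k" using v \<open>j \<in> I\<close> \<open>k \<in> I\<close> by auto
      ultimately show "?P j \<inter> ?P k = {}" using disj by auto
    qed
    have "\<Union>(?P ` I) = insert v ?U" using i(1) by auto
    then have "B - \<Union>(?P ` I) = (B - ?U) - {v}" by blast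
    then show "card (B - \<Union>(?P ` I)) < card (B - ?U)"
      using card_Diff1_less[OF finite_Diff[OF B(2)] v] by simp
  qed
qed

lemma connected_partition_extending:
  assumes B: "connected_set E B" "finite B" and "I \<noteq> {}"
  shows "\<forall>i\<in>I. P i \<subseteq> B \<and> connected_set E (P i) \<Longrightarrow>
    \<forall>i\<in>I. \<forall>j\<in>I. i \<noteq> j \<longrightarrow> P i \<inter> P j = {} \<Longrightarrow>
    \<exists>Q. (\<forall>i\<in>I. P i \<subseteq> Q i \<and> Q i \<subseteq> B \<and> connected_set E (Q i)) \<and>
        (\<forall>i\<in>I. \<forall>j\<in>I. i \<noteq> j \<longrightarrow> Q i \<inter> Q j = {}) \<and> \<Union>(Q ` I) = B"
proof (induction "card (B - \<Union>(P ` I))" arbitrary: P rule: less_induct)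
  case less
  show ?case
  proof (cases "\<Union>(P ` I) = B")
    case True
    with less.prems show ?thesis by (intro exI[of _ P] conjI) auto
  next
    case False
    from \<open>I \<noteq> {}\<close> obtain i0 where "i0 \<in> I" by blast
    from connected_parts_grow[OF B this less.prems False]
    obtain P' where P': "\<forall>i\<in>I. P i \<subseteq> P' i \<and> P' i \<subseteq> B \<and> connected_set E (P' i)"
      "\<forall>i\<in>I. \<forall>j\<in>I. i \<noteq> j \<longrightarrow> P' i \<inter> P' j = {}"
      "card (B - \<Union>(P' ` I)) < card (B - \<Union>(P ` I))" .
    have "\<forall>i\<in>I. P' i \<subseteq> B \<and> connected_set E (P' i)" using P'(1) by blast
    from less.hyps[OF P'(3) this P'(2)] obtain Q where Q:
      "\<forall>i\<in>I. P' i \<subseteq> Q i \<and> Q i \<subseteq> B \<and> connected_set E (Q i)"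
      "\<forall>i\<in>I. \<forall>j\<in>I. i \<noteq> j \<longrightarrow> Q i \<inter> Q j = {}" "\<Union>(Q ` I) = B"
      by blast
    have "P i \<subseteq> Q i" if "i \<in> I" for i
      using P'(1) Q(1) that by (meson subset_trans)
    with Q show ?thesis by (intro exI[of _ Q] conjI) auto
  qed
qed

lemma connected_partition_through:
  assumes B: "connected_set E B" "finite B" and "I \<noteq> {}" and f: "inj_on f I" "f ` I \<subseteq> B"
  obtains Q where "\<forall>i\<in>I. f i \<in> Q i \<and> Q i \<subseteq> B \<and> connected_set E (Q i)"
    "\<forall>i\<in>I. \<forall>j\<in>I. i \<noteq> j \<longrightarrow> Q i \<inter> Q j = {}" "\<Union>(Q ` I) = B"
proof -
  have "\<forall>i\<in>I. {f i} \<subseteq> B \<and> connected_set E {f i}" using f(2) by (auto simp: connected_set_singleton)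
  moreover have "\<forall>i\<in>I. \<forall>j\<in>I. i \<noteq> j \<longrightarrow> {f i} \<inter> {f j} = {}"
    using inj_on_eq_iff[OF f(1)] by auto
  ultimately show ?thesis
    using connected_partition_extending[OF B \<open>I \<noteq> {}\<close>, of "\<lambda>i. {f i}"] that by auto
qed

text \<open>The common neighbours grow into t connected parts partitioning B; these and the singletons
  of S are the branch sets of a K_{s,t} model.\<close>
lemma Kst_minor_of_common_neighbours:
  assumes g: "graph V E" and B: "B \<subseteq> V" "connected_set E B"
    and S: "S \<subseteq> V" "S \<inter> B = {}" "card S = s" and T: "T \<subseteq> B" "card T = t" and t: "t \<ge> 1"
    and adj: "\<forall>a\<in>S. \<forall>b\<in>T. {a, b} \<in> E"
  shows "\<not> no_Kst_minor s t V E"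
proof -
  let ?I = "{s..<s+t}"
  have fV: "finite V" using graph_finite_vertices[OF g] .
  have fB: "finite B" using finite_subset[OF B(1) fV] .
  have "\<exists>\<sigma>. bij_betw \<sigma> {0..<s} S"
    by (rule finite_same_card_bij) (use finite_subset[OF S(1) fV] S(3) in auto)
  then obtain \<sigma> where \<sigma>: "bij_betw \<sigma> {0..<s} S" ..
  have "\<exists>\<tau>. bij_betw \<tau> ?I T"
    by (rule finite_same_card_bij) (use finite_subset[OF T(1) fB] T(2) in auto)
  then obtain \<tau> where \<tau>: "bij_betw \<tau> ?I T" ..
  have "?I \<noteq> {}" "inj_on \<tau> ?I" "\<tau> ` ?I \<subseteq> B" using t \<tau> T(1) by (auto simp: bij_betw_def)
  then obtain Q where
    Q: "\<forall>v\<in>?I. \<tau> v \<in> Q v \<and> Q v \<subseteq> B \<and> connected_set E (Q v)"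
      "\<forall>v\<in>?I. \<forall>w\<in>?I. v \<noteq> w \<longrightarrow> Q v \<inter> Q w = {}" "\<Union>(Q ` ?I) = B"
    by (rule connected_partition_through[OF B(2) fB])
  define \<phi> where "\<phi> v = (if v < s then {\<sigma> v} else Q v)" for v
  have \<sigma>S: "\<sigma> v \<in> S" if "v < s" for v using bij_betw_apply[OF \<sigma>] that by auto
  have QB: "Q v \<subseteq> B" if "v \<in> ?I" for v using Q(1) that by blast
  show ?thesis
  proof (rule Kst_minor_of_branch_sets[OF t])
    show "\<forall>v\<in>{0..<s+t}. \<phi> v \<subseteq> V \<and> connected_set E (\<phi> v)"
    proof
      fix v assume v: "v \<in> {0..<s+t}"
      show "\<phi> v \<subseteq> V \<and> connected_set E (\<phi> v)"
      proof (cases "v < s")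
        case False
        with v have "v \<in> ?I" by simp
        with Q(1) have "Q v \<subseteq> B" "connected_set E (Q v)" by auto
        with False B(1) show ?thesis unfolding \<phi>_def by auto
      qed (use \<sigma>S S(1) connected_set_singleton in \<open>auto simp: \<phi>_def\<close>)
    qed
    show "\<forall>v\<in>{0..<s+t}. \<forall>w\<in>{0..<s+t}. v \<noteq> w \<longrightarrow> \<phi> v \<inter> \<phi> w = {}"
    proof (intro ballI impI)
      fix v w assume v: "v \<in> {0..<s+t}" and w: "w \<in> {0..<s+t}" and "v \<noteq> w"
      consider "v < s" "w < s" | "v < s" "w \<in> ?I" | "v \<in> ?I" "w < s" | "v \<in> ?I" "w \<in> ?I"
        using v w by fastforce
      then show "\<phi> v \<inter> \<phi> w = {}"
      proof cases
        case 1
        with \<open>v \<noteq> w\<close> show ?thesis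
          using inj_on_eq_iff[OF bij_betw_imp_inj_on[OF \<sigma>]] unfolding \<phi>_def by auto
      next
        case 2
        with \<sigma>S[of v] S(2) QB[of w] show ?thesis unfolding \<phi>_def by auto
      next
        case 3
        with \<sigma>S[of w] S(2) QB[of v] show ?thesis unfolding \<phi>_def by auto
      next
        case 4
        with \<open>v \<noteq> w\<close> Q(2) show ?thesis unfolding \<phi>_def by auto
      qed
    qed
    show "\<forall>v<s. \<forall>w\<in>?I. \<exists>x\<in>\<phi> v. \<exists>y\<in>\<phi> w. {x, y} \<in> E"
    proof (intro allI impI ballI)
      fix v w assume "v < s" "w \<in> ?I"
      with \<sigma>S bij_betw_apply[OF \<tau>] adj Q(1)
      have "\<sigma> v \<in> \<phi> v" "\<tau> w \<in> \<phi> w" "{\<sigma> v, \<tau> w} \<in> E"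
        unfolding \<phi>_def by auto
      then show "\<exists>x\<in>\<phi> v. \<exists>y\<in>\<phi> w. {x, y} \<in> E" by blast
    qed
    have "\<Union>(\<phi> ` ?I) = B" using Q(3) unfolding \<phi>_def by auto
    with B(2) show "connected_set E (\<Union>(\<phi> ` ?I))" by simp
  qed
qed

section \<open>Counting neighbourhood sets\<close>

definition set_enum :: "'a set \<Rightarrow> nat \<Rightarrow> 'a" where
  "set_enum S = (SOME f. bij_betw f {0..<card S} S)"

lemma bij_betw_set_enum:
  assumes "finite S"
  shows "bij_betw (set_enum S) {0..<card S} S"
proof -
  from ex_bij_betw_nat_finite[OF assms] have "\<exists>f. bij_betw f {0..<card S} S" .
  then show ?thesis unfolding set_enum_def by (rule someI_ex)
qed

definition star_edges :: "'a set set \<Rightarrow> ('a set \<Rightarrow> 'a) \<Rightarrow> 'a set set" where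
  "star_edges F c = {{c S, x} | S x. S \<in> F \<and> x \<in> S \<and> x \<noteq> c S}"

lemma star_edgesE:
  assumes "e \<in> star_edges F c"
  obtains S x where "e = {c S, x}" "S \<in> F" "x \<in> S" "x \<noteq> c S"
  using assms unfolding star_edges_def by blast

lemma graph_star_edges:
  assumes "finite A" "\<forall>S\<in>F. S \<subseteq> A \<and> c S \<in> S"
  shows "graph A (star_edges F c)"
  unfolding graph_def
proof (intro conjI ballI)
  fix e assume "e \<in> star_edges F c"
  then obtain S x where "e = {c S, x}" "S \<in> F" "x \<in> S" "x \<noteq> c S" by (rule star_edgesE)
  with assms(2) show "\<exists>u v. e = {u, v} \<and> u \<noteq> v \<and> u \<in> A \<and> v \<in> A" by blast
qed (rule assms(1))

lemma minor_model_star_edges: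
  assumes A: "A \<subseteq> V" "A \<inter> B = {}" and "B \<subseteq> V"
    and F: "\<forall>S\<in>F. S \<subseteq> A \<and> c S \<in> S"
    and rep: "inj_on rep F" "\<forall>S\<in>F. rep S \<in> B \<and> (\<forall>x\<in>S. {x, rep S} \<in> E)"
  shows "minor_model A (star_edges F c) V E (\<lambda>a. insert a (rep ` {S \<in> F. c S = a}))"
    (is "minor_model _ _ _ _ ?\<beta>")
  unfolding minor_model_def
proof (intro conjI ballI allI impI)
  fix a assume a: "a \<in> A"
  show "?\<beta> a \<subseteq> V" using a A(1) rep(2) \<open>B \<subseteq> V\<close> by auto
  have "{a, b} \<in> E" if b: "b \<in> rep ` {S \<in> F. c S = a}" for b
  proof -
    obtain S where "S \<in> F" "c S = a" "b = rep S" using b by blast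
    with F rep(2) show ?thesis by (auto simp: insert_commute)
  qed
  then show "connected_set E (?\<beta> a)" by (intro connected_set_star ballI)
next
  fix a a' assume a: "a \<in> A" "a' \<in> A" "a \<noteq> a'"
  show "?\<beta> a \<inter> ?\<beta> a' = {}"
  proof (rule equals0I)
    fix z assume z: "z \<in> ?\<beta> a \<inter> ?\<beta> a'"
    have "rep ` F \<subseteq> B" using rep(2) by auto
    with a A(2) have "a \<notin> rep ` F" "a' \<notin> rep ` F" by auto
    with z a(3) obtain S S' where "S \<in> F" "S' \<in> F" "c S = a" "c S' = a'" "z = rep S" "z = rep S'"
      by auto
    with inj_on_eq_iff[OF rep(1)] a(3) show False by auto
  qed
next
  fix v w assume "{v, w} \<in> star_edges F c"
  then obtain S x where S: "{v, w} = {c S, x}" "S \<in> F" "x \<in> S" by (rule star_edgesE)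
  then have "rep S \<in> ?\<beta> (c S)" "x \<in> ?\<beta> x" "{rep S, x} \<in> E" "{x, rep S} \<in> E"
    using rep(2) by (auto simp: insert_commute)
  with S(1) show "\<exists>p\<in>?\<beta> v. \<exists>q\<in>?\<beta> w. {p, q} \<in> E"
    unfolding doubleton_eq_iff by blast
qed

definition cooccur :: "'a set set \<Rightarrow> ('a \<times> 'a) set" where
  "cooccur F = {(a, x). a \<noteq> x \<and> (\<exists>S\<in>F. a \<in> S \<and> x \<in> S)}"

lemma card_sets_containing_le:
  assumes "finite (cooccur F `` {a})"
  shows "card {S \<in> F. a \<in> S} \<le> 2 ^ Suc (card (cooccur F `` {a}))"
proof -
  have "{S \<in> F. a \<in> S} \<subseteq> Pow (insert a (cooccur F `` {a}))"
    unfolding cooccur_def by blast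
  then have "card {S \<in> F. a \<in> S} \<le> card (Pow (insert a (cooccur F `` {a})))"
    using assms by (intro card_mono) auto
  also have "\<dots> = 2 ^ card (insert a (cooccur F `` {a}))" using assms by (simp add: card_Pow)
  also have "\<dots> \<le> 2 ^ Suc (card (cooccur F `` {a}))"
    using assms by (intro power_increasing) (simp_all add: card_insert_if)
  finally show ?thesis .
qed

text \<open>Every co-occurring pair is an edge of one of the s star minors, one for each position of the
  centre in the enumeration of the sets.\<close>
lemma card_cooccur_le:
  assumes nf: "no_Kst_minor s t V E" and t: "t \<ge> 1" and g: "graph V E"
    and A: "A \<subseteq> V" "A \<inter> B = {}" and B: "B \<subseteq> V"
    and F: "\<forall>S\<in>F. S \<subseteq> A \<and> card S = s"
    and rep: "inj_on rep F" "\<forall>S\<in>F. rep S \<in> B \<and> (\<forall>x\<in>S. {x, rep S} \<in> E)"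
  shows "card (cooccur F) \<le> 2 * s * 2 ^ (s + t) * card A"
proof -
  let ?H = "\<lambda>j. star_edges F (\<lambda>S. set_enum S j)"
  have fA: "finite A" using finite_subset[OF A(1) graph_finite_vertices[OF g]] .
  have bij: "bij_betw (set_enum S) {0..<s} S" if "S \<in> F" for S
    using bij_betw_set_enum[OF finite_subset[OF _ fA]] F that by auto
  have centre: "\<forall>S\<in>F. S \<subseteq> A \<and> set_enum S j \<in> S" if "j < s" for j
    using F bij_betw_apply[OF bij] that by auto
  have H: "card (?H j) \<le> 2 ^ (s + t) * card A" "finite (?H j)" if "j < s" for j
  proof -
    have "graph A (?H j)" using graph_star_edges[OF fA centre[OF that]] .
    with minor_model_star_edges[OF A B centre[OF that] rep]
    show "card (?H j) \<le> 2 ^ (s + t) * card A" by (intro card_minor_edges_le[OF nf t])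
    show "finite (?H j)" using graph_finite_edges[OF \<open>graph A (?H j)\<close>] .
  qed
  have "cooccur F \<subseteq> (\<Union>j<s. {(a, x). {a, x} \<in> ?H j})"
  proof
    fix p assume "p \<in> cooccur F"
    then obtain a x S where p: "p = (a, x)" "a \<noteq> x" "S \<in> F" "a \<in> S" "x \<in> S"
      unfolding cooccur_def by blast
    then obtain j where j: "j < s" "set_enum S j = a"
      using bij_betw_imp_surj_on[OF bij[OF p(3)]] by (metis atLeastLessThan_iff imageE)
    then have "{a, x} \<in> ?H j" unfolding star_edges_def using p by blast
    with p(1) j(1) show "p \<in> (\<Union>j<s. {(a, x). {a, x} \<in> ?H j})" by blast
  qed
  then have "card (cooccur F) \<le> card (\<Union>j<s. {(a, x). {a, x} \<in> ?H j})"
    using card_doubleton_preimage_set_le(1)[OF H(2)] by (intro card_mono) auto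
  also have "\<dots> \<le> (\<Sum>j<s. card {(a, x). {a, x} \<in> ?H j})" by (rule card_UN_le) simp
  also have "\<dots> \<le> (\<Sum>j<s. 2 * (2 ^ (s + t) * card A))"
  proof (rule sum_mono)
    fix j assume "j \<in> {..<s}"
    with card_doubleton_preimage_set_le(2)[OF H(2)] H(1)
    show "card {(a, x). {a, x} \<in> ?H j} \<le> 2 * (2 ^ (s + t) * card A)"
      by (meson lessThan_iff mult_le_mono2 order_trans)
  qed
  finally show ?thesis by simp
qed

text \<open>A vertex a co-occurring with at most D = 2 s 2^(s+t) others exists on average, and all
  sets containing a lie within a and these D vertices.\<close>
lemma exists_vertex_in_few_sets:
  assumes nf: "no_Kst_minor s t V E" and t: "t \<ge> 1" and g: "graph V E"
    and A: "A \<subseteq> V" "A \<inter> B = {}" "A \<noteq> {}" and B: "B \<subseteq> V"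
    and F: "\<forall>S\<in>F. S \<subseteq> A \<and> card S = s"
    and rep: "inj_on rep F" "\<forall>S\<in>F. rep S \<in> B \<and> (\<forall>x\<in>S. {x, rep S} \<in> E)"
  shows "\<exists>a\<in>A. card {S \<in> F. a \<in> S} \<le> 2 ^ (2 * s * 2 ^ (s + t) + 1)"
proof -
  let ?D = "2 * s * 2 ^ (s + t)"
  have fA: "finite A" using finite_subset[OF A(1) graph_finite_vertices[OF g]] .
  have sub: "cooccur F \<subseteq> A \<times> A" using F unfolding cooccur_def by blast
  moreover have "card (cooccur F) \<le> ?D * card A"
    using card_cooccur_le[OF nf t g A(1,2) B F rep] .
  ultimately obtain a where a: "a \<in> A" "card (cooccur F `` {a}) \<le> ?D"
    using exists_card_Image_le[OF fA A(3)] by blast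
  have "finite (cooccur F `` {a})" using finite_subset[OF _ fA] sub by blast
  then have "card {S \<in> F. a \<in> S} \<le> 2 ^ Suc (card (cooccur F `` {a}))"
    by (rule card_sets_containing_le)
  also have "\<dots> \<le> 2 ^ (?D + 1)" using a(2) by (intro power_increasing) simp_all
  finally show ?thesis using a(1) by blast
qed

lemma card_family_le:
  assumes nf: "no_Kst_minor s t V E" and t: "t \<ge> 1" and s: "s \<ge> 1" and g: "graph V E"
    and B: "B \<subseteq> V" and rep: "inj_on rep F" "\<forall>S\<in>F. rep S \<in> B \<and> (\<forall>x\<in>S. {x, rep S} \<in> E)"
  shows "A \<subseteq> V \<Longrightarrow> A \<inter> B = {} \<Longrightarrow> \<forall>S\<in>F. S \<subseteq> A \<and> card S = s \<Longrightarrow>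
    card F \<le> 2 ^ (2 * s * 2 ^ (s + t) + 1) * card A"
  using rep
proof (induction "card A" arbitrary: A F rule: less_induct)
  case less
  let ?K = "2 ^ (2 * s * 2 ^ (s + t) + 1) :: nat"
  show ?case
  proof (cases "A = {}")
    case True
    have "F = {}"
    proof (rule equals0I)
      fix S assume "S \<in> F"
      with less.prems(3) True have "S = {}" "card S = s" by auto
      with s show False by simp
    qed
    then show ?thesis by simp
  next
    case False
    from exists_vertex_in_few_sets[OF nf t g less.prems(1,2) False B less.prems(3-5)]
    obtain a where a: "a \<in> A" "card {S \<in> F. a \<in> S} \<le> ?K" by blast
    have fA: "finite A" using finite_subset[OF less.prems(1) graph_finite_vertices[OF g]] .
    have "card (A - {a}) < card A" using fA a(1) by (rule card_Diff1_less)
    moreover have "A - {a} \<subseteq> V" "(A - {a}) \<inter> B = {}" using less.prems(1,2) by auto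
    moreover have "\<forall>S\<in>{S \<in> F. a \<notin> S}. S \<subseteq> A - {a} \<and> card S = s" using less.prems(3) by blast
    moreover have "inj_on rep {S \<in> F. a \<notin> S}" using less.prems(4) by (rule inj_on_subset) blast
    moreover have "\<forall>S\<in>{S \<in> F. a \<notin> S}. rep S \<in> B \<and> (\<forall>x\<in>S. {x, rep S} \<in> E)"
      using less.prems(5) by simp
    ultimately have without_a: "card {S \<in> F. a \<notin> S} \<le> ?K * card (A - {a})"
      by (rule less.hyps)
    have "F = {S \<in> F. a \<in> S} \<union> {S \<in> F. a \<notin> S}" by blast
    then have "card F \<le> card {S \<in> F. a \<in> S} + card {S \<in> F. a \<notin> S}"
      by (metis card_Un_le)
    also have "\<dots> \<le> ?K + ?K * card (A - {a})" using a(2) without_a by (rule add_mono)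
    also have "\<dots> = ?K * card A" using card.remove[OF fA a(1)] by simp
    finally show ?thesis .
  qed
qed

lemma card_common_neighbours_less:
  assumes nf: "no_Kst_minor s t V E" and t: "t \<ge> 1" and g: "graph V E"
    and B: "B \<subseteq> V" "connected_set E B" and S: "S \<subseteq> V" "S \<inter> B = {}" "card S = s"
    and X: "X \<subseteq> B" "\<forall>a\<in>S. \<forall>b\<in>X. {a, b} \<in> E"
  shows "card X < t"
proof (rule ccontr)
  assume "\<not> card X < t"
  then obtain T where "T \<subseteq> X" "card T = t" by (meson not_less obtain_subset_with_card_n)
  with Kst_minor_of_common_neighbours[OF g B S _ _ t] X nf show False by blast
qed

lemma card_le_mult_card_neighbour_sets:
  assumes nf: "no_Kst_minor s t V E" and t: "t \<ge> 1" and g: "graph V E"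
    and B: "B \<subseteq> V" "connected_set E B" and A: "A \<subseteq> V" "A \<inter> B = {}"
    and N: "\<forall>b\<in>B. N b \<subseteq> A \<and> card (N b) = s \<and> (\<forall>a\<in>N b. {a, b} \<in> E)"
  shows "card B \<le> t * card (N ` B)"
proof (rule card_le_mult_card_image)
  show "finite B" using finite_subset[OF B(1) graph_finite_vertices[OF g]] .
  show "\<forall>S\<in>N ` B. card {b \<in> B. N b = S} \<le> t"
  proof
    fix S assume "S \<in> N ` B"
    then obtain b where "b \<in> B" "S = N b" by blast
    with N have "S \<subseteq> A" "card S = s" by auto
    with A have S: "S \<subseteq> V" "S \<inter> B = {}" "card S = s" by auto
    have "\<forall>a\<in>S. \<forall>b\<in>{b \<in> B. N b = S}. {a, b} \<in> E" using N by auto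
    from card_common_neighbours_less[OF nf t g B S _ this]
    show "card {b \<in> B. N b = S} \<le> t" by simp
  qed
qed

lemma card_neighbour_sets_le:
  assumes nf: "no_Kst_minor s t V E" and t: "t \<ge> 1" and s: "s \<ge> 1" and g: "graph V E"
    and B: "B \<subseteq> V" and A: "A \<subseteq> V" "A \<inter> B = {}"
    and N: "\<forall>b\<in>B. N b \<subseteq> A \<and> card (N b) = s \<and> (\<forall>a\<in>N b. {a, b} \<in> E)"
  shows "card (N ` B) \<le> 2 ^ (2 * s * 2 ^ (s + t) + 1) * card A"
proof (rule card_family_le[OF nf t s g B _ _ A])
  show "inj_on (inv_into B N) (N ` B)" by (rule inj_on_inv_into) simp
  show "\<forall>S\<in>N ` B. inv_into B N S \<in> B \<and> (\<forall>x\<in>S. {x, inv_into B N S} \<in> E)"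
  proof
    fix S assume "S \<in> N ` B"
    then have "inv_into B N S \<in> B" and "N (inv_into B N S) = S"
      by (rule inv_into_into, rule f_inv_into_f)
    with N show "inv_into B N S \<in> B \<and> (\<forall>x\<in>S. {x, inv_into B N S} \<in> E)" by force
  qed
qed (use N in auto)

theorem lemma5p1:
  fixes s t :: nat
  assumes "s \<ge> 1" and "t \<ge> 1"
  shows "\<exists>\<delta>::real. \<forall>(V :: 'a set) E A B.
           graph V E \<longrightarrow> no_Kst_minor s t V E \<longrightarrow>
           A \<inter> B = {} \<longrightarrow> A \<union> B = V \<longrightarrow> connected_set E B \<longrightarrow>
           (\<forall>v\<in>B. card {u \<in> A. {u, v} \<in> E} \<ge> s) \<longrightarrow>
           real (card B) \<le> \<delta> * real (card A)"
proof -
  let ?K = "2 ^ (2 * s * 2 ^ (s + t) + 1) :: nat"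
  show ?thesis
  proof (intro exI[of _ "real (t * ?K)"] allI impI)
    fix V :: "'a set" and E A B
    assume g: "graph V E" and nf: "no_Kst_minor s t V E" and AB: "A \<inter> B = {}" "A \<union> B = V"
      and cB: "connected_set E B" and deg: "\<forall>v\<in>B. card {u \<in> A. {u, v} \<in> E} \<ge> s"
    have "\<forall>b\<in>B. \<exists>X. X \<subseteq> {u \<in> A. {u, b} \<in> E} \<and> card X = s"
      using deg by (meson obtain_subset_with_card_n)
    then obtain N where "\<forall>b\<in>B. N b \<subseteq> {u \<in> A. {u, b} \<in> E} \<and> card (N b) = s" by metis
    then have N: "\<forall>b\<in>B. N b \<subseteq> A \<and> card (N b) = s \<and> (\<forall>a\<in>N b. {a, b} \<in> E)" by blast
    have "A \<subseteq> V" "B \<subseteq> V" using AB(2) by auto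
    from card_le_mult_card_neighbour_sets[OF nf assms(2) g \<open>B \<subseteq> V\<close> cB \<open>A \<subseteq> V\<close> AB(1) N]
      card_neighbour_sets_le[OF nf assms(2,1) g \<open>B \<subseteq> V\<close> \<open>A \<subseteq> V\<close> AB(1) N]
    have "card B \<le> t * ?K * card A" by (metis mult.assoc mult_le_mono2 order_trans)
    then show "real (card B) \<le> real (t * ?K) * real (card A)" by (metis of_nat_le_iff of_nat_mult)
  qed
qed

end
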